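(* Let $\mathcal{F}$ be a nonprincipal filter on $\omega$ and let $\mathcal{F}^c=\{X\subseteq\omega:\omega\setminus X\in\mathcal{F}\}$. Then $\mathcal{F}+\mathcal{F}=\mathcal{F}^c$, where $\mathcal{F}+\mathcal{F}=\{X+Y: X,Y\in\mathcal{F}\}$.
   Context: Subsets of $\omega$ are identified with their characteristic functions in $2^\omega$, and $X+Y$ denotes coordinatewise addition modulo $2$ of characteristic functions (i.e. the symmetric difference of $X$ and $Y$). *)

theory Defs
  imports Main
begin

definition is_filter_on_omega :: "nat set set \<Rightarrow> bool" where
  "is_filter_on_omega F \<longleftrightarrow>
     UNIV \<in> F \<and> {} \<notin> F \<and>
     (\<forall>X Y. X \<in> F \<longrightarrow> X \<subseteq> Y \<longrightarrow> Y \<in> F) \<and>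
     (\<forall>X Y. X \<in> F \<longrightarrow> Y \<in> F \<longrightarrow> X \<inter> Y \<in> F)"

definition nonprincipal :: "nat set set \<Rightarrow> bool" where
  "nonprincipal F \<longleftrightarrow> \<not> (\<exists>A. F = {X. A \<subseteq> X})"

text \<open>X + Y: coordinatewise addition mod 2 of characteristic functions, i.e. symmetric difference.\<close>
definition set_add2 :: "nat set \<Rightarrow> nat set \<Rightarrow> nat set" where
  "set_add2 X Y = {n. (n \<in> X) \<noteq> (n \<in> Y)}"

definition dual_ideal :: "nat set set \<Rightarrow> nat set set" where
  "dual_ideal F = {X. UNIV - X \<in> F}"

definition family_sum :: "nat set set \<Rightarrow> nat set set \<Rightarrow> nat set set" where
  "family_sum F G = {set_add2 X Y | X Y. X \<in> F \<and> Y \<in> G}"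

end

theory Submission
  imports Defs
begin

(* X + Y misses X \<inter> Y, and X \<inter> Y belongs to the filter, so the complement of X + Y does too.
   Conversely every Z equals \<omega> + (\<omega> - Z). Neither direction uses nonprincipality. *)

lemma inter_subset_compl_set_add2: "X \<inter> Y \<subseteq> UNIV - set_add2 X Y"
  unfolding set_add2_def by blast

lemma set_add2_UNIV_compl: "set_add2 UNIV (UNIV - Z) = Z"
  unfolding set_add2_def by blast

lemma family_sum_subset_dual_ideal:
  assumes "is_filter_on_omega F"
  shows "family_sum F F \<subseteq> dual_ideal F"
proof
  fix Z assume "Z \<in> family_sum F F"
  then obtain X Y where Z: "Z = set_add2 X Y" and "X \<in> F" "Y \<in> F"
    unfolding family_sum_def by blast
  have upward: "\<And>A B. A \<in> F \<Longrightarrow> A \<subseteq> B \<Longrightarrow> B \<in> F"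
    and inter: "\<And>A B. A \<in> F \<Longrightarrow> B \<in> F \<Longrightarrow> A \<inter> B \<in> F"
    using assms unfolding is_filter_on_omega_def by blast+
  have "UNIV - Z \<in> F"
    unfolding Z using upward[OF inter[OF \<open>X \<in> F\<close> \<open>Y \<in> F\<close>] inter_subset_compl_set_add2] .
  then show "Z \<in> dual_ideal F"
    unfolding dual_ideal_def by blast
qed

lemma dual_ideal_subset_family_sum:
  assumes "UNIV \<in> G"
  shows "dual_ideal F \<subseteq> family_sum G F"
proof
  fix Z assume "Z \<in> dual_ideal F"
  then have "UNIV - Z \<in> F"
    unfolding dual_ideal_def by blast
  moreover have "Z = set_add2 UNIV (UNIV - Z)"
    by (rule set_add2_UNIV_compl[symmetric])
  ultimately show "Z \<in> family_sum G F"
    unfolding family_sum_def using assms by blast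
qed

lemma family_sum_filter_eq_dual_ideal:
  assumes "is_filter_on_omega F"
  shows "family_sum F F = dual_ideal F"
proof
  show "family_sum F F \<subseteq> dual_ideal F"
    using assms by (rule family_sum_subset_dual_ideal)
  show "dual_ideal F \<subseteq> family_sum F F"
    using assms unfolding is_filter_on_omega_def by (intro dual_ideal_subset_family_sum) blast
qed

theorem lemma1p5:
  fixes F :: "nat set set"
  assumes "is_filter_on_omega F" and "nonprincipal F"
  shows "family_sum F F = dual_ideal F"
  using assms(1) by (rule family_sum_filter_eq_dual_ideal)

end
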